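(* Let $(\rho_0,p_0)$ be a solution of the TOV system on $[0,R)$ with regular centre, with mass function $m_0$, and let $$g_0(r)=\frac{m_0(r)+4\pi p_0(r)\,r^3}{r^2\,[1-2m_0(r)/r]},\qquad I_0(r)=\int_0^r g_0(s)\,ds .$$ For a real parameter $\delta p_c$ set $$D(r)=1+4\pi\,\delta p_c\int_0^r \frac{s\,e^{-2I_0(s)}}{\sqrt{1-2m_0(s)/s}}\,ds,\qquad \delta p(r)=\frac{\delta p_c\,\sqrt{1-2m_0(r)/r}\;e^{-2I_0(r)}}{D(r)} .$$ Then on every interval $[0,R')\subseteq[0,R)$ on which $D>0$, the pair $(\rho_0,\,p_0+\delta p)$ (same density, hence same mass function $m_0$) solves the TOV system with regular centre, and its central pressure is $p_0(0)+\delta p_c$. Conversely, every solution $(\rho_0,p)$ of the TOV system on $[0,R)$ with the same density $\rho_0$ and regular centre is of this form with $\delta p_c=p(0)-p_0(0)$.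
   Context: Units $G=c=1$. Given a continuous function $\rho$ on $[0,R)$ ($0<R\le\infty$), its mass function is $m(r)=4\pi\int_0^r\rho(s)s^2\,ds$. A pair $(\rho,p)$ with $\rho$ continuous and $p$ of class $C^1$ on $(0,R)$ "solves the TOV system on $[0,R)$" if $1-2m(r)/r>0$ for $0<r<R$ and $$\frac{dp}{dr}=-\frac{[\rho(r)+p(r)]\,[m(r)+4\pi p(r)r^3]}{r^2\,[1-2m(r)/r]}\quad (0<r<R).$$ It has "regular centre" if $\rho$ and $p$ extend continuously to $r=0$ with finite values $\rho(0)=\rho_c$ (central density) and $p(0)=p_c$ (central pressure). *)

theory Defs
  imports "HOL-Analysis.Analysis" "HOL-Library.Extended_Real"
begin

text \<open>Units G = c = 1. The radius bound R may be infinite, hence R :: ereal.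
  The open interval (0,R) and half-open interval [0,R).\<close>

definition openI :: "ereal \<Rightarrow> real set" where
  "openI R = {r. 0 < r \<and> ereal r < R}"

definition halfI :: "ereal \<Rightarrow> real set" where
  "halfI R = {r. 0 \<le> r \<and> ereal r < R}"

definition mass :: "(real \<Rightarrow> real) \<Rightarrow> real \<Rightarrow> real" where
  "mass \<rho> r = 4 * pi * integral {0..r} (\<lambda>s. \<rho> s * s\<^sup>2)"

definition TOV_rhs :: "(real \<Rightarrow> real) \<Rightarrow> (real \<Rightarrow> real) \<Rightarrow> real \<Rightarrow> real" where
  "TOV_rhs \<rho> p r =
     - ((\<rho> r + p r) * (mass \<rho> r + 4 * pi * p r * r ^ 3)) / (r\<^sup>2 * (1 - 2 * mass \<rho> r / r))"

definition C1_on :: "real set \<Rightarrow> (real \<Rightarrow> real) \<Rightarrow> bool" where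
  "C1_on S p \<longleftrightarrow> (\<exists>p'. continuous_on S p' \<and> (\<forall>x\<in>S. (p has_real_derivative p' x) (at x)))"

definition solves_TOV :: "(real \<Rightarrow> real) \<Rightarrow> (real \<Rightarrow> real) \<Rightarrow> ereal \<Rightarrow> bool" where
  "solves_TOV \<rho> p R \<longleftrightarrow>
     continuous_on (openI R) \<rho> \<and> C1_on (openI R) p \<and>
     (\<forall>r\<in>openI R. 1 - 2 * mass \<rho> r / r > 0) \<and>
     (\<forall>r\<in>openI R. (p has_real_derivative TOV_rhs \<rho> p r) (at r))"

text \<open>Regular centre: rho and p extend continuously to r = 0 with finite values
  rho 0 and p 0 (the values of the functions at 0 are the central values).\<close>
definition regular_centre :: "(real \<Rightarrow> real) \<Rightarrow> (real \<Rightarrow> real) \<Rightarrow> bool" where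
  "regular_centre \<rho> p \<longleftrightarrow> (\<rho> \<longlongrightarrow> \<rho> 0) (at_right 0) \<and> (p \<longlongrightarrow> p 0) (at_right 0)"

definition g0 :: "(real \<Rightarrow> real) \<Rightarrow> (real \<Rightarrow> real) \<Rightarrow> real \<Rightarrow> real" where
  "g0 \<rho> p r = (mass \<rho> r + 4 * pi * p r * r ^ 3) / (r\<^sup>2 * (1 - 2 * mass \<rho> r / r))"

definition I0 :: "(real \<Rightarrow> real) \<Rightarrow> (real \<Rightarrow> real) \<Rightarrow> real \<Rightarrow> real" where
  "I0 \<rho> p r = integral {0..r} (g0 \<rho> p)"

definition Dfun :: "(real \<Rightarrow> real) \<Rightarrow> (real \<Rightarrow> real) \<Rightarrow> real \<Rightarrow> real \<Rightarrow> real" where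
  "Dfun \<rho> p dpc r = 1 + 4 * pi * dpc *
     integral {0..r} (\<lambda>s. s * exp (- 2 * I0 \<rho> p s) / sqrt (1 - 2 * mass \<rho> s / s))"

definition delta_p :: "(real \<Rightarrow> real) \<Rightarrow> (real \<Rightarrow> real) \<Rightarrow> real \<Rightarrow> real \<Rightarrow> real" where
  "delta_p \<rho> p dpc r =
     dpc * sqrt (1 - 2 * mass \<rho> r / r) * exp (- 2 * I0 \<rho> p r) / Dfun \<rho> p dpc r"

end

theory Submission
  imports Defs
begin

text \<open>Since the right-hand side of the TOV equation is quadratic in the pressure, the
  difference \<open>\<delta>p = q - p\<close> of two solutions with the same density satisfies a Bernoulli
  equation \<open>\<delta>p' = - c \<delta>p - k \<delta>p\<^sup>2\<close>. Its linear part is solved by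
  \<open>F = sqrt (1 - 2 m / r) exp (- 2 I\<^sub>0)\<close>, and \<open>u = \<delta>p / F\<close> then satisfies \<open>u' = - k F u\<^sup>2\<close>,
  where \<open>k F\<close> is \<open>4 \<pi>\<close> times the integrand of \<open>D\<close>. Since \<open>D' = \<delta>p\<^sub>c k F\<close>,
  \<open>u = \<delta>p\<^sub>c / D\<close> solves this equation, which gives the perturbed solutions. Conversely,
  for a given solution \<open>u D - \<delta>p\<^sub>c\<close> (unlike \<open>1 / u\<close>, defined even where \<open>u = 0\<close>) satisfies a
  homogeneous linear equation and vanishes at the centre, hence everywhere; in particular \<open>D\<close>
  cannot reach \<open>0\<close> unless \<open>\<delta>p\<^sub>c = 0\<close>, where \<open>D = 1\<close>.\<close>

lemma continuous_on_Icc_from_right_limit: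
  fixes f :: "real \<Rightarrow> real"
  assumes "\<And>x. 0 < x \<Longrightarrow> x \<le> b \<Longrightarrow> isCont f x" and "(f \<longlongrightarrow> f 0) (at_right 0)"
  shows "continuous_on {0..b} f"
proof (cases "0 < b")
  case True
  show ?thesis
  proof (rule continuous_on_IccI)
    show "(f \<longlongrightarrow> f b) (at_left b)"
      using assms(1)[of b] True by (simp add: isCont_def filterlim_at_split)
  qed (use assms True in \<open>auto simp: isCont_def\<close>)
next
  case False
  then have "{0..b} \<subseteq> {0}" by auto
  then show ?thesis using continuous_on_subset continuous_on_sing by blast
qed

lemma integral_has_real_derivative_interior:
  fixes f :: "real \<Rightarrow> real"
  assumes "continuous_on {a..b} f" "a < x" "x < b"
  shows "((\<lambda>u. integral {a..u} f) has_real_derivative f x) (at x)"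
  using integral_has_real_derivative[OF assms(1), of x] assms(2,3)
  by (simp add: at_within_Icc_at)

lemma homogeneous_linear_ode_zero:
  fixes y a :: "real \<Rightarrow> real"
  assumes y_cont: "continuous_on {0..b} y" and a_cont: "continuous_on {0..b} a"
    and y0: "y 0 = 0"
    and y_deriv: "\<And>x. 0 < x \<Longrightarrow> x < b \<Longrightarrow> (y has_real_derivative - a x * y x) (at x)"
    and t: "t \<in> {0..b}"
  shows "y t = 0"
proof -
  define A where "A u = integral {0..u} a" for u
  define G where "G u = y u * exp (A u)" for u
  have "continuous_on {0..b} A"
    unfolding A_def by (intro indefinite_integral_continuous_1 integrable_continuous_interval a_cont)
  then have "continuous_on {0..b} G"
    unfolding G_def by (intro continuous_intros y_cont)
  then have G_cont: "continuous_on {0..t} G"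
    using t by (auto elim: continuous_on_subset)
  have G_deriv: "(G has_real_derivative 0) (at x)" if "0 < x" "x < t" for x
  proof -
    have "(A has_real_derivative a x) (at x)"
      unfolding A_def using that t by (intro integral_has_real_derivative_interior[OF a_cont]) auto
    then show ?thesis
      unfolding G_def using that t
      by (auto intro!: derivative_eq_intros y_deriv simp: algebra_simps)
  qed
  show "y t = 0"
  proof (cases "t = 0")
    case False
    with t have "G t = G 0"
      by (intro DERIV_isconst_end[OF _ G_cont]) (use G_deriv in auto)
    then show ?thesis by (simp add: G_def y0)
  qed (simp add: y0)
qed

lemma bernoulli_substitution:
  fixes p F u :: "real \<Rightarrow> real"
  assumes "(p has_real_derivative p') (at x)" "(F has_real_derivative - c * F x) (at x)"
    and "(u has_real_derivative - k * F x * (u x)\<^sup>2) (at x)"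
  shows "((\<lambda>r. p r + F r * u r) has_real_derivative p' - c * (F x * u x) - k * (F x * u x)\<^sup>2) (at x)"
  using assms by (auto intro!: derivative_eq_intros simp: algebra_simps power2_eq_square)

lemma bernoulli_substitution_inverse:
  fixes p q F :: "real \<Rightarrow> real"
  assumes "(p has_real_derivative p') (at x)"
    and "(q has_real_derivative p' - c * (q x - p x) - k * (q x - p x)\<^sup>2) (at x)"
    and "(F has_real_derivative - c * F x) (at x)" "F x \<noteq> 0"
  shows "((\<lambda>r. (q r - p r) / F r) has_real_derivative - k * F x * ((q x - p x) / F x)\<^sup>2) (at x)"
  using assms by (auto intro!: derivative_eq_intros simp: field_simps power2_eq_square)

lemma obtain_real_between:
  assumes "ereal x < R"
  obtains b where "x < b" "ereal b < R"
  using ereal_dense2[OF assms] by (metis less_ereal.simps(1))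

lemma halfI_if_in_Icc: "ereal b < R \<Longrightarrow> x \<in> {0..b} \<Longrightarrow> x \<in> halfI R"
  unfolding halfI_def by (auto intro: order.strict_trans1[of _ "ereal b"])

lemma openI_if_in_Ioc: "ereal b < R \<Longrightarrow> x \<in> {0<..b} \<Longrightarrow> x \<in> openI R"
  unfolding openI_def by (auto intro: order.strict_trans1[of _ "ereal b"])

lemma open_openI: "open (openI R)"
  unfolding openI_def
  by (intro open_Collect_conj open_Collect_less continuous_intros continuous_on_ereal)

lemma integral_has_real_derivative_openI:
  fixes f :: "real \<Rightarrow> real"
  assumes "\<And>b. ereal b < R \<Longrightarrow> continuous_on {0..b} f" and "x \<in> openI R"
  shows "((\<lambda>u. integral {0..u} f) has_real_derivative f x) (at x)"
proof -
  obtain b where "x < b" "ereal b < R"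
    using assms(2) obtain_real_between unfolding openI_def by blast
  then show ?thesis
    using assms(2) unfolding openI_def by (intro integral_has_real_derivative_interior assms(1)) auto
qed

definition metric_factor :: "(real \<Rightarrow> real) \<Rightarrow> real \<Rightarrow> real" where
  "metric_factor \<rho> r = 1 - 2 * mass \<rho> r / r"

definition TOV_linear_coeff :: "(real \<Rightarrow> real) \<Rightarrow> (real \<Rightarrow> real) \<Rightarrow> real \<Rightarrow> real" where
  "TOV_linear_coeff \<rho> p r =
     (mass \<rho> r + 4 * pi * r ^ 3 * (\<rho> r + 2 * p r)) / (r\<^sup>2 * metric_factor \<rho> r)"

definition TOV_quadratic_coeff :: "(real \<Rightarrow> real) \<Rightarrow> real \<Rightarrow> real" where
  "TOV_quadratic_coeff \<rho> r = 4 * pi * r ^ 3 / (r\<^sup>2 * metric_factor \<rho> r)"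

definition perturbation_factor :: "(real \<Rightarrow> real) \<Rightarrow> (real \<Rightarrow> real) \<Rightarrow> real \<Rightarrow> real" where
  "perturbation_factor \<rho> p r = sqrt (metric_factor \<rho> r) * exp (- 2 * I0 \<rho> p r)"

definition Dfun_integrand :: "(real \<Rightarrow> real) \<Rightarrow> (real \<Rightarrow> real) \<Rightarrow> real \<Rightarrow> real" where
  "Dfun_integrand \<rho> p s = s * exp (- 2 * I0 \<rho> p s) / sqrt (metric_factor \<rho> s)"

lemma TOV_rhs_expand:
  "TOV_rhs \<rho> q r = TOV_rhs \<rho> p r - TOV_linear_coeff \<rho> p r * (q r - p r)
     - TOV_quadratic_coeff \<rho> r * (q r - p r)\<^sup>2"
proof -
  let ?d = "r\<^sup>2 * metric_factor \<rho> r"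
  let ?c = "mass \<rho> r + 4 * pi * r ^ 3 * (\<rho> r + 2 * p r)" and ?k = "4 * pi * r ^ 3"
  have "TOV_rhs \<rho> q r - TOV_rhs \<rho> p r = - (?c * (q r - p r) + ?k * (q r - p r)\<^sup>2) / ?d"
    unfolding TOV_rhs_def metric_factor_def diff_divide_distrib[symmetric]
    by (simp add: algebra_simps power2_eq_square)
  also have "\<dots> = - (?c / ?d * (q r - p r) + ?k / ?d * (q r - p r)\<^sup>2)"
    by (simp add: add_divide_distrib diff_divide_distrib times_divide_eq_left[symmetric]
        del: times_divide_eq_left)
  finally show ?thesis
    unfolding TOV_linear_coeff_def TOV_quadratic_coeff_def by simp
qed

lemma Dfun_eq: "Dfun \<rho> p dpc r = 1 + 4 * pi * dpc * integral {0..r} (Dfun_integrand \<rho> p)"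
  unfolding Dfun_def Dfun_integrand_def metric_factor_def ..

lemma delta_p_eq: "delta_p \<rho> p dpc r = perturbation_factor \<rho> p r * (dpc / Dfun \<rho> p dpc r)"
  unfolding delta_p_def perturbation_factor_def metric_factor_def by simp

lemma Dfun_0 [simp]: "Dfun \<rho> p dpc 0 = 1"
  unfolding Dfun_def by simp

lemma perturbation_factor_0 [simp]: "perturbation_factor \<rho> p 0 = 1"
  unfolding perturbation_factor_def metric_factor_def I0_def by simp

lemma delta_p_0: "delta_p \<rho> p dpc 0 = dpc"
  unfolding delta_p_eq by simp

lemma TOV_quadratic_coeff_mult_perturbation_factor:
  assumes "0 < r" "0 < metric_factor \<rho> r"
  shows "TOV_quadratic_coeff \<rho> r * perturbation_factor \<rho> p r = 4 * pi * Dfun_integrand \<rho> p r"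
proof -
  have "metric_factor \<rho> r = (sqrt (metric_factor \<rho> r))\<^sup>2" using assms(2) by simp
  then show ?thesis
    using assms
    unfolding TOV_quadratic_coeff_def perturbation_factor_def Dfun_integrand_def
    by (simp add: field_simps power2_eq_square power3_eq_cube)
qed

locale TOV_solution =
  fixes \<rho> p :: "real \<Rightarrow> real" and R :: ereal
  assumes solves: "solves_TOV \<rho> p R" and regular: "regular_centre \<rho> p" and R_pos: "0 < R"
begin

lemma pressure_has_derivative: "r \<in> openI R \<Longrightarrow> (p has_real_derivative TOV_rhs \<rho> p r) (at r)"
  using solves unfolding solves_TOV_def by blast

lemma metric_factor_pos: "r \<in> halfI R \<Longrightarrow> 0 < metric_factor \<rho> r"
  using solves unfolding solves_TOV_def metric_factor_def openI_def halfI_def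
  by (cases "r = 0") auto

lemma metric_factor_pos_Icc: "ereal b < R \<Longrightarrow> r \<in> {0..b} \<Longrightarrow> 0 < metric_factor \<rho> r"
  by (intro metric_factor_pos halfI_if_in_Icc)

lemma continuous_on_density: "ereal b < R \<Longrightarrow> continuous_on {0..b} \<rho>"
proof (rule continuous_on_Icc_from_right_limit)
  fix x assume "ereal b < R" "0 < x" "x \<le> b"
  then have "x \<in> openI R" by (intro openI_if_in_Ioc) auto
  then show "isCont \<rho> x"
    using solves open_openI unfolding solves_TOV_def by (simp add: continuous_on_eq_continuous_at)
qed (use regular in \<open>simp add: regular_centre_def\<close>)

lemma continuous_on_pressure: "ereal b < R \<Longrightarrow> continuous_on {0..b} p"
proof (rule continuous_on_Icc_from_right_limit)
  fix x assume "ereal b < R" "0 < x" "x \<le> b"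
  then show "isCont p x"
    by (intro DERIV_isCont[OF pressure_has_derivative] openI_if_in_Ioc) auto
qed (use regular in \<open>simp add: regular_centre_def\<close>)

lemma mass_has_derivative:
  "r \<in> openI R \<Longrightarrow> (mass \<rho> has_real_derivative 4 * pi * (\<rho> r * r\<^sup>2)) (at r)"
  unfolding mass_def
  by (intro DERIV_cmult integral_has_real_derivative_openI continuous_intros continuous_on_density)

lemma mass_over_square_tendsto_0: "((\<lambda>r. mass \<rho> r / r\<^sup>2) \<longlongrightarrow> 0) (at_right 0)"
proof -
  obtain b where b: "0 < b" "ereal b < R"
    using obtain_real_between[of 0 R] R_pos by (auto simp: zero_ereal_def)
  have "bounded (\<rho> ` {0..b})"
    by (intro compact_imp_bounded compact_continuous_image continuous_on_density b compact_Icc)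
  then obtain M where M: "\<And>s. s \<in> {0..b} \<Longrightarrow> \<bar>\<rho> s\<bar> \<le> M"
    unfolding bounded_iff by fastforce
  have "norm (mass \<rho> r / r\<^sup>2) \<le> 4 * pi * M * r" if r: "0 < r" "r < b" for r
  proof -
    have "norm (integral {0..r} (\<lambda>s. \<rho> s * s\<^sup>2)) \<le> (M * r\<^sup>2) * (r - 0)"
    proof (rule integral_bound)
      show "continuous_on {0..r} (\<lambda>s. \<rho> s * s\<^sup>2)"
        using r continuous_on_density[OF b(2)]
        by (intro continuous_intros) (auto elim: continuous_on_subset)
      fix s assume s: "s \<in> {0..r}"
      then have "\<bar>\<rho> s\<bar> \<le> M" "s\<^sup>2 \<le> r\<^sup>2" using M r by (auto intro: power_mono)
      then show "norm (\<rho> s * s\<^sup>2) \<le> M * r\<^sup>2"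
        by (simp add: abs_mult mult_mono')
    qed (use r in auto)
    then show ?thesis
      using r unfolding mass_def by (simp add: abs_mult field_simps power2_eq_square)
  qed
  then have "\<forall>\<^sub>F r in at_right 0. norm (mass \<rho> r / r\<^sup>2) \<le> 4 * pi * M * r"
    unfolding eventually_at_right_field using b(1) by blast
  then show ?thesis
    by (rule Lim_null_comparison) (auto intro!: tendsto_eq_intros)
qed

text \<open>At \<open>r = 0\<close> the quotient is the junk value \<open>mass \<rho> 0 / 0 = 0\<close>, which happens to be
  its right-hand limit.\<close>
lemma continuous_on_mass_over_square:
  "ereal b < R \<Longrightarrow> continuous_on {0..b} (\<lambda>r. mass \<rho> r / r\<^sup>2)"
proof (rule continuous_on_Icc_from_right_limit)
  fix x assume "ereal b < R" "0 < x" "x \<le> b"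
  then have "isCont (mass \<rho>) x"
    by (intro DERIV_isCont[OF mass_has_derivative] openI_if_in_Ioc) auto
  with \<open>0 < x\<close> show "isCont (\<lambda>r. mass \<rho> r / r\<^sup>2) x"
    by (intro continuous_intros) auto
qed (use mass_over_square_tendsto_0 in simp)

lemma metric_factor_eq: "metric_factor \<rho> r = 1 - 2 * r * (mass \<rho> r / r\<^sup>2)"
  unfolding metric_factor_def by (cases "r = 0") (auto simp: power2_eq_square)

lemma continuous_on_metric_factor: "ereal b < R \<Longrightarrow> continuous_on {0..b} (metric_factor \<rho>)"
  unfolding metric_factor_eq[abs_def]
  by (intro continuous_intros continuous_on_mass_over_square)

lemma g0_eq: "g0 \<rho> p r = (mass \<rho> r / r\<^sup>2 + 4 * pi * p r * r) / metric_factor \<rho> r"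
  unfolding g0_def metric_factor_def
  by (cases "r = 0") (auto simp: field_simps power2_eq_square power3_eq_cube)

lemma continuous_on_g0: "ereal b < R \<Longrightarrow> continuous_on {0..b} (g0 \<rho> p)"
  unfolding g0_eq[abs_def] using metric_factor_pos_Icc
  by (intro continuous_intros continuous_on_mass_over_square continuous_on_metric_factor
      continuous_on_pressure) force+

lemma continuous_on_I0: "ereal b < R \<Longrightarrow> continuous_on {0..b} (I0 \<rho> p)"
  unfolding I0_def
  by (intro indefinite_integral_continuous_1 integrable_continuous_interval continuous_on_g0)

lemma I0_has_derivative: "r \<in> openI R \<Longrightarrow> (I0 \<rho> p has_real_derivative g0 \<rho> p r) (at r)"
  unfolding I0_def by (intro integral_has_real_derivative_openI continuous_on_g0)

lemma continuous_on_perturbation_factor: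
  "ereal b < R \<Longrightarrow> continuous_on {0..b} (perturbation_factor \<rho> p)"
  unfolding perturbation_factor_def
  by (intro continuous_intros continuous_on_metric_factor continuous_on_I0)

lemma continuous_on_Dfun_integrand:
  "ereal b < R \<Longrightarrow> continuous_on {0..b} (Dfun_integrand \<rho> p)"
  unfolding Dfun_integrand_def using metric_factor_pos_Icc
  by (intro continuous_intros continuous_on_metric_factor continuous_on_I0) force+

lemma continuous_on_Dfun: "ereal b < R \<Longrightarrow> continuous_on {0..b} (Dfun \<rho> p dpc)"
  unfolding Dfun_eq
  by (intro continuous_intros indefinite_integral_continuous_1 integrable_continuous_interval
      continuous_on_Dfun_integrand)

lemma Dfun_has_derivative:
  assumes "r \<in> openI R"
  shows "(Dfun \<rho> p dpc has_real_derivative 4 * pi * dpc * Dfun_integrand \<rho> p r) (at r)"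
proof -
  have "((\<lambda>u. integral {0..u} (Dfun_integrand \<rho> p)) has_real_derivative Dfun_integrand \<rho> p r) (at r)"
    by (rule integral_has_real_derivative_openI[OF continuous_on_Dfun_integrand assms])
  then show ?thesis
    unfolding Dfun_eq by (auto intro!: derivative_eq_intros)
qed

lemma metric_factor_has_derivative:
  assumes "r \<in> openI R"
  shows "(metric_factor \<rho> has_real_derivative - 2 * (4 * pi * \<rho> r * r - mass \<rho> r / r\<^sup>2)) (at r)"
proof -
  have "0 < r" using assms unfolding openI_def by simp
  then show ?thesis
    unfolding metric_factor_def[abs_def]
    by (auto intro!: derivative_eq_intros mass_has_derivative[OF assms]
        simp: field_simps power2_eq_square)
qed

lemma perturbation_factor_has_derivative:
  assumes "r \<in> openI R"
  shows "(perturbation_factor \<rho> p has_real_derivative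
           - TOV_linear_coeff \<rho> p r * perturbation_factor \<rho> p r) (at r)"
proof -
  let ?h = "metric_factor \<rho> r" and ?h' = "- 2 * (4 * pi * \<rho> r * r - mass \<rho> r / r\<^sup>2)"
  let ?S = "sqrt ?h" and ?E = "exp (- 2 * I0 \<rho> p r)" and ?g = "g0 \<rho> p r"
  have r: "0 < r" using assms unfolding openI_def by simp
  have h: "0 < ?h" using assms by (intro metric_factor_pos) (auto simp: openI_def halfI_def)
  have product_rule_eq: "inverse S / 2 * a * E + E * (- 2 * g) * S = S * E * (a / (2 * S\<^sup>2) - 2 * g)"
    if "0 < S" for S a g E :: real
    using that by (simp add: field_simps power2_eq_square)
  have "((\<lambda>x. sqrt (metric_factor \<rho> x)) has_real_derivative inverse ?S / 2 * ?h') (at r)"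
    by (rule DERIV_chain2[OF DERIV_real_sqrt[OF h] metric_factor_has_derivative[OF assms]])
  moreover have "((\<lambda>x. exp (- 2 * I0 \<rho> p x)) has_real_derivative ?E * (- 2 * ?g)) (at r)"
    by (rule DERIV_chain2[OF DERIV_exp DERIV_cmult[OF I0_has_derivative[OF assms]]])
  ultimately have "(perturbation_factor \<rho> p has_real_derivative
          inverse ?S / 2 * ?h' * ?E + ?E * (- 2 * ?g) * ?S) (at r)"
    unfolding perturbation_factor_def[abs_def] by (rule DERIV_mult)
  also have "inverse ?S / 2 * ?h' * ?E + ?E * (- 2 * ?g) * ?S = ?S * ?E * (?h' / (2 * ?S\<^sup>2) - 2 * ?g)"
    by (rule product_rule_eq) (use h in simp)
  also have "?S\<^sup>2 = ?h"
    using h by simp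
  also have "?S * ?E * (?h' / (2 * ?h) - 2 * ?g) = - TOV_linear_coeff \<rho> p r * perturbation_factor \<rho> p r"
    using r h unfolding g0_eq TOV_linear_coeff_def perturbation_factor_def
    by (simp add: field_simps power2_eq_square power3_eq_cube)
  finally show ?thesis .
qed

lemma perturbed_pressure_has_derivative:
  assumes r: "r \<in> openI R" and D: "Dfun \<rho> p dpc r \<noteq> 0"
  shows "((\<lambda>r. p r + delta_p \<rho> p dpc r) has_real_derivative
           TOV_rhs \<rho> (\<lambda>r. p r + delta_p \<rho> p dpc r) r) (at r)"
proof -
  let ?F = "perturbation_factor \<rho> p" and ?k = "TOV_quadratic_coeff \<rho> r"
  let ?u = "\<lambda>r. dpc / Dfun \<rho> p dpc r"
  have "0 < r" "0 < metric_factor \<rho> r"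
    using r by (auto intro: metric_factor_pos simp: openI_def halfI_def)
  then have kF: "?k * ?F r = 4 * pi * Dfun_integrand \<rho> p r"
    by (rule TOV_quadratic_coeff_mult_perturbation_factor)
  have "(?u has_real_derivative - (4 * pi * Dfun_integrand \<rho> p r) * (?u r)\<^sup>2) (at r)"
    using D by (auto intro!: derivative_eq_intros Dfun_has_derivative[OF r]
        simp: field_simps power2_eq_square)
  then have "(?u has_real_derivative - ?k * ?F r * (?u r)\<^sup>2) (at r)"
    by (simp only: kF mult_minus_left mult.assoc[symmetric])
  from bernoulli_substitution[OF pressure_has_derivative[OF r]
      perturbation_factor_has_derivative[OF r] this]
  show ?thesis
    using TOV_rhs_expand[of \<rho> "\<lambda>r. p r + delta_p \<rho> p dpc r" r p] by (simp add: delta_p_eq)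
qed

lemma perturbed_solves_TOV:
  assumes R': "R' \<le> R" and D: "\<forall>r\<in>halfI R'. Dfun \<rho> p dpc r \<noteq> 0"
  shows "solves_TOV \<rho> (\<lambda>r. p r + delta_p \<rho> p dpc r) R'"
proof -
  let ?q = "\<lambda>r. p r + delta_p \<rho> p dpc r"
  have sub: "openI R' \<subseteq> openI R"
    using R' unfolding openI_def by (auto intro: order.strict_trans2)
  have q_deriv: "(?q has_real_derivative TOV_rhs \<rho> ?q r) (at r)" if "r \<in> openI R'" for r
    using that sub D by (intro perturbed_pressure_has_derivative) (auto simp: openI_def halfI_def)
  have \<rho>_cont: "continuous_on (openI R') \<rho>"
    using solves sub unfolding solves_TOV_def by (auto elim: continuous_on_subset)
  have mass_cont: "continuous_on (openI R') (mass \<rho>)"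
    by (rule has_real_derivative_imp_continuous_on) (use sub mass_has_derivative in blast)
  have h_pos: "\<forall>r\<in>openI R'. 0 < 1 - 2 * mass \<rho> r / r"
    using solves sub unfolding solves_TOV_def by blast
  have "continuous_on (openI R') (TOV_rhs \<rho> ?q)"
    unfolding TOV_rhs_def[abs_def] using h_pos
    by (intro continuous_intros \<rho>_cont mass_cont has_real_derivative_imp_continuous_on[OF q_deriv])
      (auto simp: openI_def)
  with \<rho>_cont h_pos q_deriv show ?thesis
    unfolding solves_TOV_def C1_on_def by blast
qed

lemma perturbed_regular_centre:
  assumes "0 < R'" "R' \<le> R" and D: "\<forall>r\<in>halfI R'. Dfun \<rho> p dpc r \<noteq> 0"
  shows "regular_centre \<rho> (\<lambda>r. p r + delta_p \<rho> p dpc r)"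
proof -
  obtain b where b: "0 < b" "ereal b < R'"
    using obtain_real_between[of 0 R'] assms(1) by (auto simp: zero_ereal_def)
  have bR: "ereal b < R" using b(2) assms(2) by (rule order.strict_trans2)
  have "continuous_on {0..b} (delta_p \<rho> p dpc)"
    unfolding delta_p_eq[abs_def] using D halfI_if_in_Icc[OF b(2)]
    by (intro continuous_intros continuous_on_perturbation_factor continuous_on_Dfun bR) auto
  then have "(delta_p \<rho> p dpc \<longlongrightarrow> delta_p \<rho> p dpc 0) (at_right 0)"
    using b(1) by (rule continuous_on_Icc_at_rightD)
  with regular show ?thesis
    unfolding regular_centre_def by (auto intro: tendsto_add)
qed

lemma perturbation_factor_pos: "r \<in> halfI R \<Longrightarrow> 0 < perturbation_factor \<rho> p r"
  unfolding perturbation_factor_def using metric_factor_pos by simp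

lemma perturbation_ratio_mult_Dfun:
  assumes q: "solves_TOV \<rho> q R" "regular_centre \<rho> q" and r: "r \<in> halfI R"
  shows "(q r - p r) / perturbation_factor \<rho> p r * Dfun \<rho> p (q 0 - p 0) r = q 0 - p 0"
proof -
  interpret Q: TOV_solution \<rho> q R using q R_pos by unfold_locales
  define dpc where "dpc = q 0 - p 0"
  define v where "v x = (q x - p x) / perturbation_factor \<rho> p x" for x
  define a where "a x = 4 * pi * Dfun_integrand \<rho> p x * v x" for x
  define y where "y x = v x * Dfun \<rho> p dpc x - dpc" for x
  obtain b where b: "r < b" "ereal b < R"
    using r obtain_real_between unfolding halfI_def by blast
  have v_cont: "continuous_on {0..b} v"
    unfolding v_def using perturbation_factor_pos halfI_if_in_Icc[OF b(2)]
    by (intro continuous_intros Q.continuous_on_pressure continuous_on_pressure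
        continuous_on_perturbation_factor b(2)) force
  have y_cont: "continuous_on {0..b} y" and a_cont: "continuous_on {0..b} a"
    unfolding y_def a_def
    by (intro continuous_intros v_cont continuous_on_Dfun continuous_on_Dfun_integrand b(2))+
  have y_deriv: "(y has_real_derivative - a x * y x) (at x)" if x: "0 < x" "x < b" for x
  proof -
    let ?k = "TOV_quadratic_coeff \<rho> x" and ?F = "perturbation_factor \<rho> p"
    have xR: "x \<in> openI R" using b(2) x by (intro openI_if_in_Ioc) auto
    then have "x \<in> halfI R" by (simp add: openI_def halfI_def)
    then have "0 < metric_factor \<rho> x" "?F x \<noteq> 0"
      using metric_factor_pos perturbation_factor_pos by force+
    then have kF: "?k * ?F x = 4 * pi * Dfun_integrand \<rho> p x"
      using x by (intro TOV_quadratic_coeff_mult_perturbation_factor) auto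
    have "(q has_real_derivative TOV_rhs \<rho> p x - TOV_linear_coeff \<rho> p x * (q x - p x)
           - ?k * (q x - p x)\<^sup>2) (at x)"
      using Q.pressure_has_derivative[OF xR] by (simp only: TOV_rhs_expand[of \<rho> q x p])
    from bernoulli_substitution_inverse[OF pressure_has_derivative[OF xR] this
        perturbation_factor_has_derivative[OF xR] \<open>?F x \<noteq> 0\<close>]
    have "(v has_real_derivative - (4 * pi * Dfun_integrand \<rho> p x) * (v x)\<^sup>2) (at x)"
      unfolding v_def[abs_def] by (simp only: kF mult_minus_left mult.assoc[symmetric])
    then show ?thesis
      unfolding y_def[abs_def] a_def
      by (auto intro!: derivative_eq_intros Dfun_has_derivative[OF xR]
          simp: algebra_simps power2_eq_square)
  qed
  have "y 0 = 0"
    unfolding y_def v_def dpc_def by simp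
  from homogeneous_linear_ode_zero[OF y_cont a_cont this y_deriv]
  have "y r = 0" using r b unfolding halfI_def by auto
  then show ?thesis unfolding y_def v_def dpc_def by simp
qed

lemma TOV_solution_eq_perturbed:
  assumes q: "solves_TOV \<rho> q R" "regular_centre \<rho> q" and r: "r \<in> halfI R"
  shows "0 < Dfun \<rho> p (q 0 - p 0) r \<and> q r = p r + delta_p \<rho> p (q 0 - p 0) r"
proof -
  define dpc where "dpc = q 0 - p 0"
  have ratio: "(q x - p x) / perturbation_factor \<rho> p x * Dfun \<rho> p dpc x = dpc"
    if "x \<in> halfI R" for x
    unfolding dpc_def by (rule perturbation_ratio_mult_Dfun[OF q that])
  have D_pos: "0 < Dfun \<rho> p dpc r"
  proof (rule ccontr)
    assume "\<not> 0 < Dfun \<rho> p dpc r"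
    moreover have "continuous_on {0..r} (Dfun \<rho> p dpc)"
      using r unfolding halfI_def by (intro continuous_on_Dfun) simp
    ultimately obtain x where x: "0 \<le> x" "x \<le> r" "Dfun \<rho> p dpc x = 0"
      using IVT2'[of "Dfun \<rho> p dpc" r 0 0] r unfolding halfI_def by force
    then have "x \<in> halfI R"
      using r halfI_if_in_Icc[of r R x] unfolding halfI_def by auto
    then have "dpc = 0" using ratio x(3) by force
    then show False using \<open>\<not> 0 < Dfun \<rho> p dpc r\<close> by (simp add: Dfun_def)
  qed
  moreover have "q r = p r + delta_p \<rho> p dpc r"
    using ratio[OF r] D_pos perturbation_factor_pos[OF r]
    unfolding delta_p_eq by (simp add: field_simps)
  ultimately show ?thesis unfolding dpc_def ..
qed

end

theorem theoremP1:
  fixes \<rho>0 p0 :: "real \<Rightarrow> real" and R :: ereal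
  assumes "0 < R"
    and "solves_TOV \<rho>0 p0 R" and "regular_centre \<rho>0 p0"
  shows "(\<forall>dpc R'. 0 < R' \<and> R' \<le> R \<and> (\<forall>r\<in>halfI R'. Dfun \<rho>0 p0 dpc r > 0) \<longrightarrow>
            solves_TOV \<rho>0 (\<lambda>r. p0 r + delta_p \<rho>0 p0 dpc r) R' \<and>
            regular_centre \<rho>0 (\<lambda>r. p0 r + delta_p \<rho>0 p0 dpc r) \<and>
            p0 0 + delta_p \<rho>0 p0 dpc 0 = p0 0 + dpc)
       \<and> (\<forall>p. solves_TOV \<rho>0 p R \<and> regular_centre \<rho>0 p \<longrightarrow>
            (\<forall>r\<in>halfI R. Dfun \<rho>0 p0 (p 0 - p0 0) r > 0 \<and>
                         p r = p0 r + delta_p \<rho>0 p0 (p 0 - p0 0) r))"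
proof -
  interpret TOV_solution \<rho>0 p0 R
    using assms by unfold_locales
  have "solves_TOV \<rho>0 (\<lambda>r. p0 r + delta_p \<rho>0 p0 dpc r) R' \<and>
        regular_centre \<rho>0 (\<lambda>r. p0 r + delta_p \<rho>0 p0 dpc r)"
    if "0 < R'" "R' \<le> R" "\<forall>r\<in>halfI R'. Dfun \<rho>0 p0 dpc r > 0" for dpc R'
    using that by (intro conjI perturbed_solves_TOV perturbed_regular_centre) auto
  moreover have "p r = p0 r + delta_p \<rho>0 p0 (p 0 - p0 0) r"
    and "Dfun \<rho>0 p0 (p 0 - p0 0) r > 0"
    if "solves_TOV \<rho>0 p R" "regular_centre \<rho>0 p" "r \<in> halfI R" for p r
    using TOV_solution_eq_perturbed[OF that] by simp_all
  ultimately show ?thesis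
    by (auto simp: delta_p_0)
qed

end
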